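(* Fix $\mathbf{x} \in \Omega$, $\alpha \in [0,1)$ and $i \in \{1,\dots,n\}$, and let $C = \{x_{(i)}\}$. Then $$B_{R_i}^*(\mathbf{x}) = \min\{E[F] : F \in \mathcal{F}_{C^+}(\Omega(\mathbf{x},R_i),\alpha)\}.$$
   Context: Fix integers $m \ge 2$, $n \ge 1$ and reals $S_{\min} < S_{\max}$; $S = \{S_0,\dots,S_{m-1}\}$ with $S_k = S_{\min} + k\frac{S_{\max}-S_{\min}}{m-1}$. $\mathcal{F}$ is the set of probability distributions on $S$, identified with the probability simplex in $\mathbb{R}^m$ with the Euclidean topology; $E[F]$ is the mean. $\Omega$ is the set of samples of size $n$ from $S$, identified with their sorted versions $x_{(1)} \le \dots \le x_{(n)}$. $P_F[\Omega']$ is the probability that the sorted sample of $n$ i.i.d. draws from $F$ lies in $\Omega' \subseteq \Omega$; $\mathcal{G}(\Omega',\alpha) = \{F : P_F[\Omega'] > \alpha\}$ and $\mathcal{F}(\Omega',\alpha)$ is its closure. The $i$th quantile preorder $R_i$ on $\Omega$: $\mathbf{x} \lesssim_{R_i} \mathbf{y}$ iff $x_{(i)} \le y_{(i)}$; $\Omega(\mathbf{x},R_i) = \{\mathbf{y} : x_{(i)} \le y_{(i)}\}$; $B_{R_i}^*(\mathbf{x}) = \min\{E[F] : F \in \mathcal{F}(\Omega(\mathbf{x},R_i),\alpha)\}$. For $C \subseteq S$: $\mathcal{F}_C = \{F \in \mathcal{F} : P_F[X = s] = 0 \ \forall s \in S\setminus C\}$, $\mathcal{G}_C(\Omega',\alpha)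 = \mathcal{F}_C \cap \mathcal{G}(\Omega',\alpha)$, $\mathcal{F}_C(\Omega',\alpha)$ is the closure of $\mathcal{G}_C(\Omega',\alpha)$, and $C^+ = C \cup \{S_{\min}\} \cup \{S_{j+1} : S_j \in C,\ j \le m-2\}$. *)

theory Defs
  imports "HOL-Analysis.Analysis"
begin

definition Spt :: "nat \<Rightarrow> real \<Rightarrow> real \<Rightarrow> nat \<Rightarrow> real" where
  "Spt m Smin Smax k = Smin + real k * (Smax - Smin) / (real m - 1)"

text \<open>Distributions on S, identified with the probability simplex in R^m:
  a distribution is a function F :: nat => real with F k = P[X = S_k] for k < m
  and F k = 0 for k >= m (so the product topology on nat => real restricts to the
  Euclidean topology of R^m on these functions).\<close>
definition Fdist :: "nat \<Rightarrow> (nat \<Rightarrow> real) set" where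
  "Fdist m = {F. (\<forall>k. 0 \<le> F k) \<and> (\<forall>k\<ge>m. F k = 0) \<and> (\<Sum>k<m. F k) = 1}"

definition mean :: "nat \<Rightarrow> real \<Rightarrow> real \<Rightarrow> (nat \<Rightarrow> real) \<Rightarrow> real" where
  "mean m Smin Smax F = (\<Sum>k<m. F k * Spt m Smin Smax k)"

text \<open>Samples of size n from S, identified with their sorted versions (sorted lists);
  x_(i) is xs ! (i - 1).\<close>
definition Samples :: "nat \<Rightarrow> nat \<Rightarrow> real \<Rightarrow> real \<Rightarrow> real list set" where
  "Samples m n Smin Smax =
     {xs. length xs = n \<and> sorted xs \<and> set xs \<subseteq> Spt m Smin Smax ` {0..<m}}"

text \<open>P_F[Omega']: probability that the sorted sample of n i.i.d. draws from F lies in Omega'.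
  Sum over all ordered index sequences of length n.\<close>
definition probF :: "nat \<Rightarrow> nat \<Rightarrow> real \<Rightarrow> real \<Rightarrow> (nat \<Rightarrow> real) \<Rightarrow> real list set \<Rightarrow> real" where
  "probF m n Smin Smax F \<Omega>' =
     (\<Sum>ks\<in>{ks. length ks = n \<and> set ks \<subseteq> {0..<m}}.
        if sort (map (Spt m Smin Smax) ks) \<in> \<Omega>' then (\<Prod>j<n. F (ks ! j)) else 0)"

definition Gset :: "nat \<Rightarrow> nat \<Rightarrow> real \<Rightarrow> real \<Rightarrow> real list set \<Rightarrow> real \<Rightarrow> (nat \<Rightarrow> real) set" where
  "Gset m n Smin Smax \<Omega>' \<alpha> = {F \<in> Fdist m. probF m n Smin Smax F \<Omega>' > \<alpha>}"

definition Fset :: "nat \<Rightarrow> nat \<Rightarrow> real \<Rightarrow> real \<Rightarrow> real list set \<Rightarrow> real \<Rightarrow> (nat \<Rightarrow> real) set" where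
  "Fset m n Smin Smax \<Omega>' \<alpha> = closure (Gset m n Smin Smax \<Omega>' \<alpha>)"

definition OmegaRi :: "nat \<Rightarrow> nat \<Rightarrow> real \<Rightarrow> real \<Rightarrow> real list \<Rightarrow> nat \<Rightarrow> real list set" where
  "OmegaRi m n Smin Smax x i = {y \<in> Samples m n Smin Smax. x ! (i - 1) \<le> y ! (i - 1)}"

text \<open>B*_{R_i}(x) = min {E[F] : F in F(Omega(x,R_i), alpha)} (as an infimum; it is attained).\<close>
definition Bstar :: "nat \<Rightarrow> nat \<Rightarrow> real \<Rightarrow> real \<Rightarrow> real \<Rightarrow> real list \<Rightarrow> nat \<Rightarrow> real" where
  "Bstar m n Smin Smax \<alpha> x i =
     Inf (mean m Smin Smax ` Fset m n Smin Smax (OmegaRi m n Smin Smax x i) \<alpha>)"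

definition FdistC :: "nat \<Rightarrow> real \<Rightarrow> real \<Rightarrow> real set \<Rightarrow> (nat \<Rightarrow> real) set" where
  "FdistC m Smin Smax C = {F \<in> Fdist m. \<forall>k<m. Spt m Smin Smax k \<notin> C \<longrightarrow> F k = 0}"

definition GsetC :: "nat \<Rightarrow> nat \<Rightarrow> real \<Rightarrow> real \<Rightarrow> real set \<Rightarrow> real list set \<Rightarrow> real \<Rightarrow> (nat \<Rightarrow> real) set" where
  "GsetC m n Smin Smax C \<Omega>' \<alpha> = FdistC m Smin Smax C \<inter> Gset m n Smin Smax \<Omega>' \<alpha>"

definition FsetC :: "nat \<Rightarrow> nat \<Rightarrow> real \<Rightarrow> real \<Rightarrow> real set \<Rightarrow> real list set \<Rightarrow> real \<Rightarrow> (nat \<Rightarrow> real) set" where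
  "FsetC m n Smin Smax C \<Omega>' \<alpha> = closure (GsetC m n Smin Smax C \<Omega>' \<alpha>)"

definition Cplus :: "nat \<Rightarrow> real \<Rightarrow> real \<Rightarrow> real set \<Rightarrow> real set" where
  "Cplus m Smin Smax C = C \<union> {Smin} \<union>
     {Spt m Smin Smax (j + 1) | j. Spt m Smin Smax j \<in> C \<and> j + 2 \<le> m}"

end

theory Submission
  imports Defs
begin

text \<open>Whether the sorted sample satisfies x_(i) \<le> y_(i) depends only on how many of the
  n draws fall strictly below x_(i). Hence P_F[\<Omega>(x,R_i)] depends on F only through the mass p
  that F puts below x_(i), and the two-point distribution with mass p at S_min and 1 - p at
  x_(i) has the same probability but no larger mean. The mean of these two-point distributions
  decreases in p, so the minimum is attained at the supremum of the admissible p; that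
  distribution is a limit of admissible two-point distributions, all supported on
  {S_min, x_(i)} \<subseteq> C^+.\<close>

lemma sorted_le_nth_iff_length_filter_less:
  fixes zs :: "'a::linorder list"
  assumes sorted: "sorted zs" and j: "j < length zs"
  shows "c \<le> zs ! j \<longleftrightarrow> length (filter (\<lambda>z. z < c) zs) \<le> j"
proof
  assume "c \<le> zs ! j"
  have "{l. l < length zs \<and> zs ! l < c} \<subseteq> {..<j}"
  proof (intro subsetI, rule ccontr)
    fix l
    assume "l \<in> {l. l < length zs \<and> zs ! l < c}" and "l \<notin> {..<j}"
    then show False
      using sorted_nth_mono[OF sorted, of j l] \<open>c \<le> zs ! j\<close> by auto
  qed
  then have "card {l. l < length zs \<and> zs ! l < c} \<le> j"
    using card_mono[of "{..<j}"] by fastforce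
  then show "length (filter (\<lambda>z. z < c) zs) \<le> j"
    by (simp add: length_filter_conv_card)
next
  assume count: "length (filter (\<lambda>z. z < c) zs) \<le> j"
  show "c \<le> zs ! j"
  proof (rule ccontr)
    assume "\<not> c \<le> zs ! j"
    then have "{..j} \<subseteq> {l. l < length zs \<and> zs ! l < c}"
      using sorted_nth_mono[OF sorted _ j] j by force
    then have "card {..j} \<le> card {l. l < length zs \<and> zs ! l < c}"
      by (intro card_mono) auto
    then show False
      using count by (simp add: length_filter_conv_card)
  qed
qed

lemma sum_prod_words_pattern_cong:
  fixes F G :: "'a \<Rightarrow> 'c::comm_semiring_1" and \<phi> :: "'a \<Rightarrow> 'b"
  assumes "finite A"
    and class_sums: "\<And>b. (\<Sum>k | k \<in> A \<and> \<phi> k = b. F k) = (\<Sum>k | k \<in> A \<and> \<phi> k = b. G k)"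
  shows "(\<Sum>ks | length ks = n \<and> set ks \<subseteq> A. if P (map \<phi> ks) then \<Prod>j<n. F (ks ! j) else 0) =
         (\<Sum>ks | length ks = n \<and> set ks \<subseteq> A. if P (map \<phi> ks) then \<Prod>j<n. G (ks ! j) else 0)"
proof (induction n arbitrary: P)
  case 0
  have "{ks. length ks = 0 \<and> set ks \<subseteq> A} = {[]}" by auto
  then show ?case by (simp only:) simp
next
  case (Suc n)
  define W where "W = {ks. length ks = n \<and> set ks \<subseteq> A}"
  have words_Suc: "{ks. length ks = Suc n \<and> set ks \<subseteq> A} = (\<lambda>(k, ks). k # ks) ` (A \<times> W)"
    by (auto simp: W_def length_Suc_conv)
  have inj: "inj_on (\<lambda>(k, ks). k # ks) (A \<times> W)"
    by (auto simp: inj_on_def)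
  define R where "R H b = (\<Sum>ks\<in>W. if P (b # map \<phi> ks) then \<Prod>j<n. H (ks ! j) else 0)"
    for H :: "'a \<Rightarrow> 'c" and b
  have split: "(\<Sum>ks | length ks = Suc n \<and> set ks \<subseteq> A.
                  if P (map \<phi> ks) then \<Prod>j<Suc n. H (ks ! j) else 0)
             = (\<Sum>b\<in>\<phi> ` A. (\<Sum>k | k \<in> A \<and> \<phi> k = b. H k) * R H b)" for H
  proof -
    have "(\<Sum>ks | length ks = Suc n \<and> set ks \<subseteq> A.
              if P (map \<phi> ks) then \<Prod>j<Suc n. H (ks ! j) else 0)
        = (\<Sum>(k, ks)\<in>A \<times> W. H k * (if P (\<phi> k # map \<phi> ks) then \<Prod>j<n. H (ks ! j) else 0))"
      unfolding words_Suc sum.reindex[OF inj]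
      by (intro sum.cong) (auto simp: prod.lessThan_Suc_shift simp del: prod.lessThan_Suc)
    also have "\<dots> = (\<Sum>k\<in>A. H k * R H (\<phi> k))"
      by (simp add: sum.cartesian_product[symmetric] sum_distrib_left R_def)
    also have "\<dots> = (\<Sum>b\<in>\<phi> ` A. \<Sum>k | k \<in> A \<and> \<phi> k = b. H k * R H (\<phi> k))"
      by (rule sum.image_gen[OF \<open>finite A\<close>])
    also have "\<dots> = (\<Sum>b\<in>\<phi> ` A. (\<Sum>k | k \<in> A \<and> \<phi> k = b. H k) * R H b)"
      by (auto simp: sum_distrib_right intro!: sum.cong)
    finally show ?thesis .
  qed
  have "R F b = R G b" for b
    using Suc.IH[of "\<lambda>bs. P (b # bs)"] by (simp add: R_def W_def)
  then show ?case
    using split[of F] split[of G] class_sums by simp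
qed

lemma cInf_image_closure_eq:
  fixes f :: "'a::topological_space \<Rightarrow> real"
  assumes "continuous_on UNIV f" and "p \<in> closure G" and "\<And>g. g \<in> G \<Longrightarrow> f p \<le> f g"
  shows "Inf (f ` closure G) = f p"
proof -
  have "closure G \<subseteq> {g. f p \<le> f g}"
    by (rule closure_minimal) (use assms in \<open>auto intro: closed_Collect_le continuous_on_const\<close>)
  then show ?thesis
    by (intro cInf_eq_minimum) (use assms(2) in auto)
qed

lemma Spt_less_Spt_iff:
  assumes "2 \<le> m" and "Smin < Smax"
  shows "Spt m Smin Smax a < Spt m Smin Smax b \<longleftrightarrow> a < b"
proof -
  define d where "d = (Smax - Smin) / (real m - 1)"
  have "0 < d"
    using assms by (simp add: d_def)
  moreover have "Spt m Smin Smax k = Smin + real k * d" for k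
    by (simp add: Spt_def d_def)
  ultimately show ?thesis
    by simp
qed

lemma Spt_le_Spt_iff:
  assumes "2 \<le> m" and "Smin < Smax"
  shows "Spt m Smin Smax a \<le> Spt m Smin Smax b \<longleftrightarrow> a \<le> b"
  using Spt_less_Spt_iff[OF assms, of b a] by linarith

lemma Spt_0 [simp]: "Spt m Smin Smax 0 = Smin"
  by (simp add: Spt_def)

lemma continuous_on_mean: "continuous_on UNIV (mean m Smin Smax)"
  unfolding mean_def by (intro continuous_intros continuous_on_product_coordinates)

lemma FsetC_subset_Fset: "FsetC m n Smin Smax C \<Omega>' \<alpha> \<subseteq> Fset m n Smin Smax \<Omega>' \<alpha>"
  unfolding FsetC_def Fset_def GsetC_def by (intro closure_mono) auto

lemma probF_point_mass:
  assumes "c < m"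
  shows "probF m n Smin Smax (\<lambda>k. if k = c then 1 else 0) \<Omega>' =
           (if replicate n (Spt m Smin Smax c) \<in> \<Omega>' then 1 else 0)"
proof -
  define W where "W = {ks. length ks = n \<and> set ks \<subseteq> {0..<m}}"
  have "finite W"
    unfolding W_def using finite_lists_length_eq[of "{0..<m}" n] by (simp add: conj_commute)
  have "(\<Prod>j<n. if ks ! j = c then 1 else 0 :: real) = (if ks = replicate n c then 1 else 0)"
    if "ks \<in> W" for ks
  proof (cases "ks = replicate n c")
    case False
    then obtain j where "j < n" and "ks ! j \<noteq> c"
      using \<open>ks \<in> W\<close> by (auto simp: W_def list_eq_iff_nth_eq)
    then have "(\<Prod>j<n. if ks ! j = c then 1 else 0 :: real) = 0"
      by (intro prod_zero) auto
    then show ?thesis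
      using False by simp
  qed simp
  then have "probF m n Smin Smax (\<lambda>k. if k = c then 1 else 0) \<Omega>' =
      (\<Sum>ks\<in>W. if ks = replicate n c then (if sort (map (Spt m Smin Smax) ks) \<in> \<Omega>' then 1 else 0) else 0)"
    unfolding probF_def W_def[symmetric] by (intro sum.cong) auto
  also have "\<dots> = (if replicate n (Spt m Smin Smax c) \<in> \<Omega>' then 1 else 0)"
    using \<open>finite W\<close> assms by (simp add: W_def set_replicate_conv_if)
  finally show ?thesis .
qed

definition two_point :: "nat \<Rightarrow> real \<Rightarrow> nat \<Rightarrow> real" where
  "two_point kc q k = (if k = 0 then q else 0) + (if k = kc then 1 - q else 0)"

definition mass_below :: "nat \<Rightarrow> (nat \<Rightarrow> real) \<Rightarrow> real" where
  "mass_below kc F = (\<Sum>k<kc. F k)"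

lemma two_point_in_Fdist:
  assumes "kc < m" and "0 \<le> q" and "q \<le> 1"
  shows "two_point kc q \<in> Fdist m"
  using assms by (auto simp: Fdist_def two_point_def sum.distrib)

lemma two_point_0: "two_point kc 0 = (\<lambda>k. if k = kc then 1 else 0)"
  by (auto simp: two_point_def fun_eq_iff)

lemma mass_below_two_point: "mass_below kc (two_point kc q) = (if kc = 0 then 0 else q)"
  by (simp add: mass_below_def two_point_def sum.distrib)

lemma mass_below_bounds:
  assumes "F \<in> Fdist m" and "kc \<le> m"
  shows "0 \<le> mass_below kc F" and "mass_below kc F \<le> 1"
proof -
  show "0 \<le> mass_below kc F"
    using assms(1) by (auto simp: mass_below_def Fdist_def intro: sum_nonneg)
  have "mass_below kc F \<le> (\<Sum>k<m. F k)"
    unfolding mass_below_def using assms by (intro sum_mono2) (auto simp: Fdist_def)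
  then show "mass_below kc F \<le> 1"
    using assms(1) by (simp add: Fdist_def)
qed

lemma continuous_on_two_point: "continuous_on X (two_point kc)"
proof (rule continuous_on_coordinatewise_then_product)
  show "continuous_on X (\<lambda>q. two_point kc q k)" for k
    by (cases "k = 0"; cases "k = kc") (auto simp: two_point_def intro!: continuous_intros)
qed

locale quantile_threshold =
  fixes m n :: nat and Smin Smax :: real and x :: "real list" and i kc :: nat
  assumes m_ge_2: "2 \<le> m" and Smin_less_Smax: "Smin < Smax"
    and i_pos: "1 \<le> i" and i_le_n: "i \<le> n"
    and kc_less_m: "kc < m" and x_i_eq: "x ! (i - 1) = Spt m Smin Smax kc"
begin

abbreviation S :: "nat \<Rightarrow> real" where
  "S \<equiv> Spt m Smin Smax"

abbreviation \<Omega> :: "real list set" where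
  "\<Omega> \<equiv> OmegaRi m n Smin Smax x i"

lemma Smin_le_S: "Smin \<le> S k"
  using Spt_le_Spt_iff[OF m_ge_2 Smin_less_Smax, of 0 k] by simp

lemma sort_map_S_in_\<Omega>_iff:
  assumes "length ks = n" and "set ks \<subseteq> {0..<m}"
  shows "sort (map S ks) \<in> \<Omega> \<longleftrightarrow> length (filter (\<lambda>k. k < kc) ks) \<le> i - 1"
proof -
  have "sort (map S ks) \<in> Samples m n Smin Smax"
    using assms by (auto simp: Samples_def)
  then have "sort (map S ks) \<in> \<Omega> \<longleftrightarrow> S kc \<le> sort (map S ks) ! (i - 1)"
    unfolding OmegaRi_def x_i_eq by simp
  also have "\<dots> \<longleftrightarrow> length (filter (\<lambda>z. z < S kc) (sort (map S ks))) \<le> i - 1"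
    by (rule sorted_le_nth_iff_length_filter_less) (use assms i_pos i_le_n in auto)
  also have "length (filter (\<lambda>z. z < S kc) (sort (map S ks))) = length (filter (\<lambda>k. k < kc) ks)"
    by (simp add: filter_sort filter_map comp_def Spt_less_Spt_iff[OF m_ge_2 Smin_less_Smax])
  finally show ?thesis .
qed

lemma sum_lessThan_m_split: "(\<Sum>k<m. f k) = (\<Sum>k<kc. f k) + (\<Sum>k\<in>{kc..<m}. f k)"
  using sum.atLeastLessThan_concat[of 0 kc m f] kc_less_m by (simp add: atLeast0LessThan)

lemma sum_atLeast_kc_eq_1_minus_mass_below:
  assumes "F \<in> Fdist m"
  shows "(\<Sum>k\<in>{kc..<m}. F k) = 1 - mass_below kc F"
  using assms sum_lessThan_m_split[of F] by (simp add: Fdist_def mass_below_def)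

lemma probF_\<Omega>_cong:
  assumes "F \<in> Fdist m" and "G \<in> Fdist m" and "mass_below kc F = mass_below kc G"
  shows "probF m n Smin Smax F \<Omega> = probF m n Smin Smax G \<Omega>"
proof -
  have by_pattern: "probF m n Smin Smax H \<Omega> =
      (\<Sum>ks | length ks = n \<and> set ks \<subseteq> {0..<m}.
         if length (filter id (map (\<lambda>k. k < kc) ks)) \<le> i - 1 then \<Prod>j<n. H (ks ! j) else 0)" for H
    unfolding probF_def by (intro sum.cong refl) (simp add: sort_map_S_in_\<Omega>_iff filter_map comp_def)
  have "(\<Sum>k | k \<in> {0..<m} \<and> (k < kc) = b. F k) = (\<Sum>k | k \<in> {0..<m} \<and> (k < kc) = b. G k)" for b
  proof (cases b)
    case True
    then have "{k. k \<in> {0..<m} \<and> (k < kc) = b} = {..<kc}"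
      using kc_less_m by auto
    then show ?thesis
      using assms(3) by (simp add: mass_below_def)
  next
    case False
    then have "{k. k \<in> {0..<m} \<and> (k < kc) = b} = {kc..<m}"
      using kc_less_m by auto
    then show ?thesis
      using assms by (simp add: sum_atLeast_kc_eq_1_minus_mass_below)
  qed
  then show ?thesis
    unfolding by_pattern by (rule sum_prod_words_pattern_cong[OF finite_atLeastLessThan])
qed

lemma probF_\<Omega>_two_point_mass_below:
  assumes "F \<in> Fdist m"
  shows "probF m n Smin Smax (two_point kc (mass_below kc F)) \<Omega> = probF m n Smin Smax F \<Omega>"
proof (rule probF_\<Omega>_cong)
  show "two_point kc (mass_below kc F) \<in> Fdist m"
    using assms kc_less_m mass_below_bounds[of F m kc] by (intro two_point_in_Fdist) auto
  show "mass_below kc (two_point kc (mass_below kc F)) = mass_below kc F"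
    unfolding mass_below_two_point by (simp add: mass_below_def)
qed (use assms in simp)

lemma probF_\<Omega>_two_point_0: "probF m n Smin Smax (two_point kc 0) \<Omega> = 1"
proof -
  have "replicate n (S kc) \<in> Samples m n Smin Smax"
    using kc_less_m by (auto simp: Samples_def)
  then have "replicate n (S kc) \<in> \<Omega>"
    using i_pos i_le_n unfolding OmegaRi_def x_i_eq by simp
  then show ?thesis
    by (simp add: two_point_0 probF_point_mass kc_less_m)
qed

lemma two_point_in_FdistC:
  assumes "0 \<le> q" and "q \<le> 1"
  shows "two_point kc q \<in> FdistC m Smin Smax (Cplus m Smin Smax {x ! (i - 1)})"
  using two_point_in_Fdist[OF kc_less_m assms] unfolding x_i_eq
  by (auto simp: FdistC_def Cplus_def two_point_def)

lemma mean_two_point: "mean m Smin Smax (two_point kc q) = q * Smin + (1 - q) * S kc"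
proof -
  have "two_point kc q k * S k = (if k = 0 then q * Smin else 0) + (if k = kc then (1 - q) * S kc else 0)"
    for k
    by (simp add: two_point_def distrib_right)
  then show ?thesis
    using kc_less_m m_ge_2 by (simp add: mean_def sum.distrib)
qed

lemma mean_two_point_antimono:
  assumes "p \<le> q"
  shows "mean m Smin Smax (two_point kc q) \<le> mean m Smin Smax (two_point kc p)"
proof -
  have "0 \<le> (q - p) * (S kc - Smin)"
    using assms Smin_le_S[of kc] by simp
  then show ?thesis
    by (simp add: mean_two_point algebra_simps)
qed

lemma mean_two_point_mass_below_le:
  assumes "F \<in> Fdist m"
  shows "mean m Smin Smax (two_point kc (mass_below kc F)) \<le> mean m Smin Smax F"
proof -
  have F_nonneg: "0 \<le> F k" for k
    using assms by (simp add: Fdist_def)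
  have "mean m Smin Smax (two_point kc (mass_below kc F))
      = mass_below kc F * Smin + (\<Sum>k\<in>{kc..<m}. F k) * S kc"
    using assms by (simp add: mean_two_point sum_atLeast_kc_eq_1_minus_mass_below)
  also have "\<dots> = (\<Sum>k<kc. F k * Smin) + (\<Sum>k\<in>{kc..<m}. F k * S kc)"
    by (simp add: mass_below_def sum_distrib_right)
  also have "\<dots> \<le> (\<Sum>k<kc. F k * S k) + (\<Sum>k\<in>{kc..<m}. F k * S k)"
    using F_nonneg Spt_le_Spt_iff[OF m_ge_2 Smin_less_Smax] Smin_le_S
    by (intro add_mono sum_mono mult_left_mono) auto
  also have "\<dots> = mean m Smin Smax F"
    by (simp add: mean_def sum_lessThan_m_split)
  finally show ?thesis .
qed

lemma optimal_two_point:
  assumes "\<alpha> < 1"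
  obtains F where "F \<in> FsetC m n Smin Smax (Cplus m Smin Smax {x ! (i - 1)}) \<Omega> \<alpha>"
    and "\<And>G. G \<in> Gset m n Smin Smax \<Omega> \<alpha> \<Longrightarrow> mean m Smin Smax F \<le> mean m Smin Smax G"
proof -
  define A where "A = {q \<in> {0..1}. \<alpha> < probF m n Smin Smax (two_point kc q) \<Omega>}"
  define q where "q = Sup A"
  have "0 \<in> A"
    using assms by (simp add: A_def probF_\<Omega>_two_point_0)
  have "bdd_above A"
    by (auto simp: A_def bdd_above_def)
  have "q \<in> closure A"
    unfolding q_def using \<open>0 \<in> A\<close> \<open>bdd_above A\<close> by (intro closure_contains_Sup) auto
  have "two_point kc ` A \<subseteq> GsetC m n Smin Smax (Cplus m Smin Smax {x ! (i - 1)}) \<Omega> \<alpha>"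
    using two_point_in_FdistC by (auto simp: A_def GsetC_def Gset_def FdistC_def)
  then have "two_point kc q \<in> FsetC m n Smin Smax (Cplus m Smin Smax {x ! (i - 1)}) \<Omega> \<alpha>"
    using image_closure_subset[OF continuous_on_two_point closed_closure] \<open>q \<in> closure A\<close>
    unfolding FsetC_def by (meson closure_subset image_subset_iff order_trans)
  moreover have "mean m Smin Smax (two_point kc q) \<le> mean m Smin Smax G"
    if "G \<in> Gset m n Smin Smax \<Omega> \<alpha>" for G
  proof -
    have G: "G \<in> Fdist m" "\<alpha> < probF m n Smin Smax G \<Omega>"
      using that by (auto simp: Gset_def)
    then have "mass_below kc G \<in> A"
      using mass_below_bounds[OF G(1)] kc_less_m
      by (simp add: A_def probF_\<Omega>_two_point_mass_below)
    then have "mass_below kc G \<le> q"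
      unfolding q_def using \<open>bdd_above A\<close> by (rule cSup_upper)
    then have "mean m Smin Smax (two_point kc q) \<le> mean m Smin Smax (two_point kc (mass_below kc G))"
      by (rule mean_two_point_antimono)
    also have "\<dots> \<le> mean m Smin Smax G"
      by (rule mean_two_point_mass_below_le[OF G(1)])
    finally show ?thesis .
  qed
  ultimately show ?thesis
    using that by blast
qed

end

theorem theorem5:
  fixes m n :: nat and Smin Smax \<alpha> :: real and x :: "real list" and i :: nat
  assumes "m \<ge> 2" and "n \<ge> 1" and "Smin < Smax"
    and "x \<in> Samples m n Smin Smax"
    and "0 \<le> \<alpha>" and "\<alpha> < 1"
    and "1 \<le> i" and "i \<le> n"
  defines "C \<equiv> {x ! (i - 1)}"
  shows "Bstar m n Smin Smax \<alpha> x i =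
           Inf (mean m Smin Smax ` FsetC m n Smin Smax (Cplus m Smin Smax C)
                  (OmegaRi m n Smin Smax x i) \<alpha>)
       \<and> Bstar m n Smin Smax \<alpha> x i \<in>
           mean m Smin Smax ` FsetC m n Smin Smax (Cplus m Smin Smax C)
                  (OmegaRi m n Smin Smax x i) \<alpha>"
proof -
  have "x ! (i - 1) \<in> Spt m Smin Smax ` {0..<m}"
    using assms(4,7,8) nth_mem[of "i - 1" x] by (auto simp: Samples_def)
  then obtain kc where "kc < m" and "x ! (i - 1) = Spt m Smin Smax kc"
    by auto
  then interpret quantile_threshold m n Smin Smax x i kc
    using assms by unfold_locales auto
  obtain F where F_in: "F \<in> FsetC m n Smin Smax (Cplus m Smin Smax C) \<Omega> \<alpha>"
    and F_min: "\<And>G. G \<in> Gset m n Smin Smax \<Omega> \<alpha> \<Longrightarrow> mean m Smin Smax F \<le> mean m Smin Smax G"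
    using optimal_two_point[OF \<open>\<alpha> < 1\<close>] unfolding C_def by blast
  have "F \<in> Fset m n Smin Smax \<Omega> \<alpha>"
    using F_in FsetC_subset_Fset by blast
  then have "Bstar m n Smin Smax \<alpha> x i = mean m Smin Smax F"
    unfolding Bstar_def Fset_def using F_min by (intro cInf_image_closure_eq continuous_on_mean)
  moreover have "Inf (mean m Smin Smax ` FsetC m n Smin Smax (Cplus m Smin Smax C) \<Omega> \<alpha>) =
      mean m Smin Smax F"
    unfolding FsetC_def using F_in F_min
    by (intro cInf_image_closure_eq continuous_on_mean) (auto simp: FsetC_def GsetC_def)
  ultimately show ?thesis
    using F_in by auto
qed

end
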